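(* Under the assumptions that $p,q>0$ $\mu$-a.e. and $\rho^{\mathrm w}_\alpha(p,q)\in(0,\infty)$ for all $\alpha\in[0,1]$, \[ \mathrm{TV}_\varphi(\mathbb P^{\otimes n},\mathbb Q^{\otimes n})=\frac12\Big((E_\varphi(p))^n+(E_\varphi(q))^n\Big)-\exp\{-nD_C^{\mathrm w}(\mathbb P,\mathbb Q)+o(n)\},\qquad n\to\infty . \]
   Context: Let $\mathcal X$ be a Polish space, $\mu$ a $\sigma$-finite reference measure, $\mathbb P,\mathbb Q$ probability measures with densities $p,q$ w.r.t. $\mu$, and $\varphi:\mathcal X\to[0,\infty)$ a measurable weight extended by $\varphi(x_1^n)=\prod_{i=1}^n\varphi(x_i)$; $p(x_1^n)=\prod_ip(x_i)$, $q(x_1^n)=\prod_iq(x_i)$. $E_\varphi(r)=\int_{\mathcal X}\varphi r\,\mathrm d\mu$. Weighted total variation: $\mathrm{TV}_\varphi(\mathbb P^{\otimes n},\mathbb Q^{\otimes n})=\frac12\int_{\mathcal X^n}\varphi(x_1^n)|p(x_1^n)-q(x_1^n)|\,\mathrm d\mu^{\otimes n}(x_1^n)$. Weighted affinity $\rho^{\mathrm w}_\alpha(p,q)=\int\varphi\,p^\alpha q^{1-\alpha}\,\mathrm d\mu$, and weighted Chernoff information $D_C^{\mathrm w}(\mathbb P,\mathbb Q)=\max_{\alpha\in[0,1]}[-\ln\rho^{\mathrm w}_\alpha(p,q)]$. *)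

theory Defs
  imports "HOL-Probability.Probability"
begin

definition tuple_weight :: "('a \<Rightarrow> real) \<Rightarrow> nat \<Rightarrow> (nat \<Rightarrow> 'a) \<Rightarrow> real" where
  "tuple_weight f n x = (\<Prod>i<n. f (x i))"

definition E_phi :: "'a measure \<Rightarrow> ('a \<Rightarrow> real) \<Rightarrow> ('a \<Rightarrow> real) \<Rightarrow> real" where
  "E_phi M \<phi> r = (\<integral>x. \<phi> x * r x \<partial>M)"

definition TV_phi :: "'a measure \<Rightarrow> ('a \<Rightarrow> real) \<Rightarrow> ('a \<Rightarrow> real) \<Rightarrow> ('a \<Rightarrow> real) \<Rightarrow> nat \<Rightarrow> real" where
  "TV_phi M \<phi> p q n = (1/2) * (\<integral>x. tuple_weight \<phi> n x *
       \<bar>tuple_weight p n x - tuple_weight q n x\<bar> \<partial>(PiM {..<n} (\<lambda>_. M)))"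

text \<open>Weighted affinity, as an extended nonnegative real (so finiteness can be stated).\<close>
definition rho_w :: "'a measure \<Rightarrow> ('a \<Rightarrow> real) \<Rightarrow> ('a \<Rightarrow> real) \<Rightarrow> ('a \<Rightarrow> real) \<Rightarrow> real \<Rightarrow> ennreal" where
  "rho_w M \<phi> p q \<alpha> = (\<integral>\<^sup>+x. ennreal (\<phi> x * p x powr \<alpha> * q x powr (1 - \<alpha>)) \<partial>M)"

definition chernoff_w :: "'a measure \<Rightarrow> ('a \<Rightarrow> real) \<Rightarrow> ('a \<Rightarrow> real) \<Rightarrow> ('a \<Rightarrow> real) \<Rightarrow> real" where
  "chernoff_w M \<phi> p q = (SUP \<alpha>\<in>{0..1}. - ln (enn2real (rho_w M \<phi> p q \<alpha>)))"

end

theory Submission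
  imports Defs
begin

text \<open>
  Since \<open>\<bar>P - Q\<bar> = P + Q - 2 min P Q\<close>, the weighted total variation of the \<open>n\<close>-fold
  products is \<open>(E\<^sub>\<phi>(p)^n + E\<^sub>\<phi>(q)^n)/2 - m\<^sub>n\<close>, where the overlap \<open>m\<^sub>n\<close> integrates
  \<open>\<phi>(x\<^sub>1)...\<phi>(x\<^sub>n) min(p(x\<^sub>1)...p(x\<^sub>n), q(x\<^sub>1)...q(x\<^sub>n))\<close>; it remains to show
  \<open>m\<^sub>n = exp(-n D + o(n))\<close>. From \<open>min P Q \<le> P^a Q^(1-a)\<close> we get \<open>m\<^sub>n \<le> \<rho>\<^sub>a^n\<close>
  for every \<open>a \<in> [0,1]\<close>.

  For the lower bound restrict to the set where the log-likelihood ratio \<open>\<ell> = ln(p/q)\<close>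
  satisfies \<open>\<bar>\<ell>\<bar> \<le> K\<close>. There \<open>\<rho>\<^sub>K(b) = \<integral> \<phi> q exp(b \<ell>)\<close> is convex with a uniform
  quadratic Taylor bound, so at its minimiser \<open>a\<close> on \<open>[0,1]\<close> the first-order conditions make
  \<open>\<rho>\<^sub>K(a(1+h))\<close> and \<open>\<rho>\<^sub>K(a - (1-a)h)\<close> exceed \<open>\<rho>\<^sub>K(a)\<close> by \<open>O(h^2)\<close> only. Integrating
  \<open>exp(a L) \<le> A min(exp L, 1) + A^(-h) (exp(a(1+h)L) + exp((a-(1-a)h)L))\<close>, with \<open>L\<close> the
  log-likelihood ratio of an \<open>n\<close>-tuple and \<open>A = exp(n \<epsilon>/2)\<close>, then gives
  \<open>m\<^sub>n \<ge> exp(-n \<epsilon>) \<rho>\<^sub>K(a)^n\<close> for large \<open>n\<close>. Finally \<open>\<rho>\<^sub>K \<rightarrow> \<rho>\<close> uniformly on \<open>[0,1]\<close> as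
  \<open>K \<rightarrow> \<infinity>\<close>, by dominated convergence.
\<close>

lemma exp_diff_le_mult_exp: "exp a - exp b \<le> (a - b) * exp (a::real)"
proof -
  have "exp a * (1 + (b - a)) \<le> exp a * exp (b - a)"
    by (intro mult_left_mono exp_ge_add_one_self) auto
  then show ?thesis by (simp add: exp_diff algebra_simps)
qed

lemma abs_exp_minus_one_minus_le: "\<bar>exp y - 1 - y\<bar> \<le> y\<^sup>2 * exp \<bar>y::real\<bar>"
proof -
  have lower: "0 \<le> exp y - 1 - y" using exp_ge_add_one_self[of y] by linarith
  have "exp y - 1 - y \<le> y * (exp y - 1)"
    using exp_diff_le_mult_exp[of y 0] by (simp add: algebra_simps)
  also have "\<dots> \<le> y\<^sup>2 * exp \<bar>y\<bar>"
  proof (cases "y \<ge> 0")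
    case True
    have "exp y - 1 \<le> y * exp y" using exp_diff_le_mult_exp[of y 0] by simp
    then show ?thesis using True by (simp add: power2_eq_square mult_left_mono mult.assoc)
  next
    case False
    have "1 - exp y \<le> - y" using exp_ge_add_one_self[of y] by linarith
    then have "(- y) * (1 - exp y) \<le> (- y) * (- y)" using False by (intro mult_left_mono) auto
    also have "\<dots> \<le> y\<^sup>2 * exp \<bar>y\<bar>"
      using mult_left_mono[of 1 "exp \<bar>y\<bar>" "y\<^sup>2"] by (simp add: power2_eq_square)
    finally show ?thesis by (simp add: algebra_simps)
  qed
  finally show ?thesis using lower by simp
qed

lemma one_le_add_powr_neg:
  assumes "y > 0" "h > 0"
  shows "1 \<le> y + y powr (- h::real)"
proof (cases "y \<ge> 1")
  case True
  then show ?thesis using powr_ge_zero[of y "- h"] by linarith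
next
  case False
  then have "1 \<le> (1 / y) powr h" using assms by (intro ge_one_powr_ge_zero) auto
  also have "(1 / y) powr h = y powr (- h)" using assms by (simp add: powr_minus_divide powr_divide)
  finally show ?thesis using assms by simp
qed

lemma exp_mult_le_min_add_powr:
  fixes A h a L :: real
  assumes "A > 0" "h > 0"
  shows "exp (a * L) \<le>
    A * min (exp L) 1 + A powr (- h) * (exp (a * (1 + h) * L) + exp ((a - (1 - a) * h) * L))"
proof -
  have "exp (a * L) \<le> A * min (exp L) 1 + A powr (- h) * exp (a * (1 + h) * L) \<or>
      exp (a * L) \<le> A * min (exp L) 1 + A powr (- h) * exp ((a - (1 - a) * h) * L)"
  proof (cases "L \<ge> 0")
    case True
    define y where "y = A * exp (- a * L)"
    have "exp (a * L) * 1 \<le> exp (a * L) * (y + y powr (- h))"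
      using one_le_add_powr_neg[of y h] assms by (intro mult_left_mono) (auto simp: y_def)
    also have "\<dots> = A + A powr (- h) * exp (a * (1 + h) * L)"
      using assms by (simp add: y_def powr_mult powr_def ln_mult algebra_simps flip: exp_add)
    finally show ?thesis using True by (simp add: min_absorb2)
  next
    case False
    define y where "y = A * exp ((1 - a) * L)"
    have "exp (a * L) * 1 \<le> exp (a * L) * (y + y powr (- h))"
      using one_le_add_powr_neg[of y h] assms by (intro mult_left_mono) (auto simp: y_def)
    also have "\<dots> = A * exp L + A powr (- h) * exp ((a - (1 - a) * h) * L)"
      using assms by (simp add: y_def powr_mult powr_def ln_mult algebra_simps flip: exp_add)
    finally show ?thesis using False by (simp add: min_absorb1)
  qed
  moreover have "0 \<le> A powr (- h) * exp (a * (1 + h) * L)"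
    and "0 \<le> A powr (- h) * exp ((a - (1 - a) * h) * L)"
    by simp_all
  ultimately show ?thesis by (simp only: distrib_left) linarith
qed

lemma min_le_powr_mult_powr:
  fixes P Q a :: real
  assumes "0 \<le> P" "0 \<le> Q" "a \<in> {0..1}"
  shows "min P Q \<le> P powr a * Q powr (1 - a)"
proof (cases "P = 0 \<or> Q = 0")
  case True
  then show ?thesis using assms by auto
next
  case False
  then have "P > 0" "Q > 0" using assms by auto
  then have "min P Q = min P Q powr a * min P Q powr (1 - a)" by (simp add: powr_add[symmetric])
  also have "\<dots> \<le> P powr a * Q powr (1 - a)"
    using \<open>P > 0\<close> \<open>Q > 0\<close> assms(3) by (intro mult_mono powr_mono2) auto
  finally show ?thesis .
qed

lemma nonneg_slope_at_right_min:
  fixes f :: "real \<Rightarrow> real"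
  assumes "\<tau> > 0"
    and min: "\<And>t. 0 < t \<Longrightarrow> t \<le> \<tau> \<Longrightarrow> f a \<le> f (a + t)"
    and taylor: "\<And>t. 0 < t \<Longrightarrow> t \<le> \<tau> \<Longrightarrow> f (a + t) \<le> f a + t * d + t\<^sup>2 * C"
  shows "d \<ge> 0"
proof (rule ccontr)
  assume "\<not> d \<ge> 0"
  define t where "t = min \<tau> (- d / (2 * (\<bar>C\<bar> + 1)))"
  have "- d / (2 * (\<bar>C\<bar> + 1)) > 0" using \<open>\<not> d \<ge> 0\<close> by (intro divide_pos_pos) auto
  then have t: "0 < t" "t \<le> \<tau>" using \<open>\<tau> > 0\<close> by (auto simp: t_def)
  have "t * C \<le> t * (\<bar>C\<bar> + 1)" using t by (intro mult_left_mono) auto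
  also have "\<dots> \<le> - d / (2 * (\<bar>C\<bar> + 1)) * (\<bar>C\<bar> + 1)"
    by (intro mult_right_mono) (auto simp: t_def)
  also have "\<dots> = - d / 2" using abs_ge_zero[of C] by (simp add: field_simps)
  finally have "t * (d + t * C) < 0" using t \<open>\<not> d \<ge> 0\<close> by (intro mult_pos_neg) auto
  then show False using min[OF t] taylor[OF t] by (simp add: power2_eq_square algebra_simps)
qed

lemma eventually_exp_le_of_split_bound:
  fixes m :: "nat \<Rightarrow> real"
  assumes "\<rho> > 0" "h > 0" "\<epsilon> > 0"
    and "0 \<le> u" "u \<le> \<rho> * exp (h * \<epsilon> / 4)" and "0 \<le> v" "v \<le> \<rho> * exp (h * \<epsilon> / 4)"
    and split: "\<And>A n. A > 0 \<Longrightarrow> \<rho> ^ n \<le> A * m n + A powr (- h) * (u ^ n + v ^ n)"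
  shows "\<forall>\<^sub>F n in sequentially. exp (real n * (ln \<rho> - \<epsilon>)) \<le> m n"
proof -
  have "filterlim (\<lambda>n. real n * c) at_top sequentially" if "c > 0" for c :: real
    using filterlim_at_top_mult_tendsto_pos[OF tendsto_const that filterlim_real_sequentially] .
  then have "\<forall>\<^sub>F n in sequentially. ln 4 \<le> real n * (h * \<epsilon> / 4)"
    and "\<forall>\<^sub>F n in sequentially. ln 2 \<le> real n * (\<epsilon> / 2)"
    using assms(2,3) by (simp_all add: filterlim_at_top)
  then show ?thesis
  proof eventually_elim
    case (elim n)
    define A where "A = exp (real n * \<epsilon> / 2)"
    have "A > 0" by (simp add: A_def)
    have "u ^ n + v ^ n \<le> 2 * (\<rho> * exp (h * \<epsilon> / 4)) ^ n"
      using power_mono[OF assms(5,4), of n] power_mono[OF assms(7,6), of n] by linarith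
    also have "\<dots> = 2 * \<rho> ^ n * exp (real n * (h * \<epsilon> / 4))"
      by (simp add: power_mult_distrib exp_of_nat_mult[symmetric] mult.commute)
    finally have "A powr (- h) * (u ^ n + v ^ n)
        \<le> A powr (- h) * (2 * \<rho> ^ n * exp (real n * (h * \<epsilon> / 4)))"
      by (intro mult_left_mono) auto
    also have "\<dots> = \<rho> ^ n * (2 * exp (- (real n * (h * \<epsilon> / 4))))"
      by (simp add: A_def powr_def algebra_simps flip: exp_add)
    also have "\<dots> \<le> \<rho> ^ n * (1 / 2)"
    proof -
      have "exp (- (real n * (h * \<epsilon> / 4))) \<le> exp (- ln 4)" using elim by simp
      then show ?thesis using \<open>\<rho> > 0\<close> by (intro mult_left_mono) (auto simp: exp_minus)
    qed
    finally have "\<rho> ^ n / (2 * A) \<le> m n"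
      using split[OF \<open>A > 0\<close>, of n] \<open>A > 0\<close> by (simp add: field_simps)
    moreover have "2 * A \<le> exp (real n * \<epsilon>)"
    proof -
      have "2 \<le> exp (real n * \<epsilon> / 2)"
        using elim(2) exp_le_cancel_iff[of "ln 2" "real n * \<epsilon> / 2"] by simp
      then have "2 * A \<le> exp (real n * \<epsilon> / 2) * A" using \<open>A > 0\<close> by simp
      also have "\<dots> = exp (real n * \<epsilon>)" by (simp add: A_def flip: exp_add)
      finally show ?thesis .
    qed
    then have "exp (real n * (ln \<rho> - \<epsilon>)) \<le> \<rho> ^ n / (2 * A)"
      using \<open>\<rho> > 0\<close> \<open>A > 0\<close>
      by (simp add: right_diff_distrib exp_diff exp_of_nat_mult divide_left_mono)
    ultimately show ?case by linarith
  qed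
qed

lemma exp_little_o_of_exp_bounds:
  fixes m :: "nat \<Rightarrow> real"
  assumes upper: "\<And>\<epsilon>. \<epsilon> > 0 \<Longrightarrow> \<forall>\<^sub>F n in sequentially. m n \<le> exp (real n * (\<epsilon> - D))"
    and lower: "\<And>\<epsilon>. \<epsilon> > 0 \<Longrightarrow> \<forall>\<^sub>F n in sequentially. exp (real n * (- D - \<epsilon>)) \<le> m n"
  shows "\<exists>e :: nat \<Rightarrow> real. e \<in> o(\<lambda>n. real n) \<and>
    (\<forall>\<^sub>F n in sequentially. m n = exp (- real n * D + e n))"
proof -
  define e where "e n = ln (m n) + real n * D" for n
  have "e \<in> o(\<lambda>n. real n)"
  proof (rule landau_o.smallI)
    fix c :: real assume "c > 0"
    from upper[OF \<open>c > 0\<close>] lower[OF \<open>c > 0\<close>] show "\<forall>\<^sub>F n in sequentially. norm (e n) \<le> c * norm (real n)"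
    proof eventually_elim
      case (elim n)
      then have "m n > 0" using exp_gt_zero less_le_trans by blast
      have "real n * (- D - c) \<le> ln (m n)"
        using elim(2) \<open>m n > 0\<close> by (simp add: ln_ge_iff)
      moreover have "ln (m n) \<le> real n * (c - D)"
        using elim(1) \<open>m n > 0\<close> by (metis ln_exp ln_le_cancel_iff exp_gt_zero)
      ultimately show ?case by (simp add: e_def abs_le_iff algebra_simps)
    qed
  qed
  moreover have "\<forall>\<^sub>F n in sequentially. m n = exp (- real n * D + e n)"
    using lower[OF zero_less_one]
    by eventually_elim (simp add: e_def, metis exp_gt_zero exp_ln less_le_trans)
  ultimately show ?thesis by blast
qed

lemma tuple_weight_mult: "tuple_weight f n x * tuple_weight g n x = (\<Prod>i<n. f (x i) * g (x i))"
  by (simp add: tuple_weight_def prod.distrib)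

lemma tuple_weight_nonneg: "(\<And>y. f y \<ge> 0) \<Longrightarrow> tuple_weight f n x \<ge> 0"
  by (simp add: tuple_weight_def prod_nonneg)

lemma integrable_prod_components:
  fixes f :: "'a \<Rightarrow> real"
  assumes "sigma_finite_measure M" "integrable M f"
  shows "integrable (PiM {..<n::nat} (\<lambda>_. M)) (\<lambda>x. \<Prod>i<n. f (x i))"
proof -
  interpret product_sigma_finite "\<lambda>_. M" using assms(1) by (simp add: product_sigma_finite_def)
  show ?thesis by (rule product_integrable_prod) (auto simp: assms(2))
qed

lemma integral_prod_components:
  fixes f :: "'a \<Rightarrow> real"
  assumes "sigma_finite_measure M" "integrable M f"
  shows "(\<integral>x. (\<Prod>i<n. f (x i)) \<partial>PiM {..<n::nat} (\<lambda>_. M)) = (\<integral>x. f x \<partial>M) ^ n"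
proof -
  interpret product_sigma_finite "\<lambda>_. M" using assms(1) by (simp add: product_sigma_finite_def)
  show ?thesis using product_integral_prod[of "{..<n}" "\<lambda>_. f"] assms(2) by simp
qed

text \<open>
  As \<open>0 powr 0 = 0\<close>, \<open>rho_w\<close> at \<open>1\<close> (at \<open>0\<close>) ignores the set where \<open>q\<close> (\<open>p\<close>) vanishes.
\<close>
lemma rho_w_one:
  assumes "\<And>x. p x \<ge> 0" "AE x in M. q x > 0"
  shows "rho_w M \<phi> p q 1 = (\<integral>\<^sup>+x. ennreal (\<phi> x * p x) \<partial>M)"
  unfolding rho_w_def using assms(2) by (intro nn_integral_cong_AE) (auto simp: powr_one assms(1))

lemma rho_w_zero:
  assumes "\<And>x. q x \<ge> 0" "AE x in M. p x > 0"
  shows "rho_w M \<phi> p q 0 = (\<integral>\<^sup>+x. ennreal (\<phi> x * q x) \<partial>M)"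
  unfolding rho_w_def using assms(2) by (intro nn_integral_cong_AE) (auto simp: powr_one assms(1))

locale weighted_densities =
  fixes M :: "'a measure" and p q \<phi> :: "'a \<Rightarrow> real"
  assumes sigma_finite: "sigma_finite_measure M"
    and measurable_p [measurable]: "p \<in> borel_measurable M"
    and measurable_q [measurable]: "q \<in> borel_measurable M"
    and measurable_phi [measurable]: "\<phi> \<in> borel_measurable M"
    and p_nonneg: "\<And>x. p x \<ge> 0" and q_nonneg: "\<And>x. q x \<ge> 0" and phi_nonneg: "\<And>x. \<phi> x \<ge> 0"
    and integrable_phi_p: "integrable M (\<lambda>x. \<phi> x * p x)"
    and integrable_phi_q: "integrable M (\<lambda>x. \<phi> x * q x)"
begin

abbreviation power_measure :: "nat \<Rightarrow> (nat \<Rightarrow> 'a) measure" where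
  "power_measure n \<equiv> PiM {..<n} (\<lambda>_. M)"

definition overlap_density :: "nat \<Rightarrow> (nat \<Rightarrow> 'a) \<Rightarrow> real" where
  "overlap_density n x = tuple_weight \<phi> n x * min (tuple_weight p n x) (tuple_weight q n x)"

definition overlap :: "nat \<Rightarrow> real" where
  "overlap n = (\<integral>x. overlap_density n x \<partial>power_measure n)"

lemma overlap_density_nonneg: "overlap_density n x \<ge> 0"
  using p_nonneg q_nonneg phi_nonneg by (simp add: overlap_density_def tuple_weight_nonneg)

lemma measurable_overlap_density [measurable]: "overlap_density n \<in> borel_measurable (power_measure n)"
  unfolding overlap_density_def tuple_weight_def by measurable

lemma integrable_overlap_density: "integrable (power_measure n) (overlap_density n)"
proof (rule Bochner_Integration.integrable_bound)
  show "integrable (power_measure n) (\<lambda>x. \<Prod>i<n. \<phi> (x i) * p (x i))"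
    by (rule integrable_prod_components[OF sigma_finite integrable_phi_p])
  have "norm (overlap_density n x) \<le> norm (tuple_weight \<phi> n x * tuple_weight p n x)" for x
  proof -
    have "overlap_density n x \<le> tuple_weight \<phi> n x * tuple_weight p n x"
      unfolding overlap_density_def using phi_nonneg by (intro mult_left_mono tuple_weight_nonneg) auto
    then show ?thesis using overlap_density_nonneg[of n x] by simp
  qed
  then show "AE x in power_measure n. norm (overlap_density n x) \<le> norm (\<Prod>i<n. \<phi> (x i) * p (x i))"
    by (simp add: tuple_weight_mult)
qed measurable

lemma TV_phi_eq_overlap:
  "TV_phi M \<phi> p q n = 1/2 * ((E_phi M \<phi> p) ^ n + (E_phi M \<phi> q) ^ n) - overlap n"
proof -
  have "tuple_weight \<phi> n x * \<bar>tuple_weight p n x - tuple_weight q n x\<bar> =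
      (\<Prod>i<n. \<phi> (x i) * p (x i)) + (\<Prod>i<n. \<phi> (x i) * q (x i)) - 2 * overlap_density n x" for x
    by (simp add: overlap_density_def min_def tuple_weight_mult[symmetric] algebra_simps)
  then have "(\<integral>x. tuple_weight \<phi> n x * \<bar>tuple_weight p n x - tuple_weight q n x\<bar> \<partial>power_measure n)
      = (\<integral>x. (\<Prod>i<n. \<phi> (x i) * p (x i)) + (\<Prod>i<n. \<phi> (x i) * q (x i))
          - 2 * overlap_density n x \<partial>power_measure n)"
    by simp
  also have "\<dots> = (E_phi M \<phi> p) ^ n + (E_phi M \<phi> q) ^ n - 2 * overlap n"
    using integrable_overlap_density
      integrable_prod_components[OF sigma_finite integrable_phi_p]
      integrable_prod_components[OF sigma_finite integrable_phi_q]
      integral_prod_components[OF sigma_finite integrable_phi_p]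
      integral_prod_components[OF sigma_finite integrable_phi_q]
    by (simp add: E_phi_def overlap_def)
  finally show ?thesis by (simp add: TV_phi_def)
qed

definition affinity_density :: "real \<Rightarrow> 'a \<Rightarrow> real" where
  "affinity_density a x = \<phi> x * p x powr a * q x powr (1 - a)"

definition affinity :: "real \<Rightarrow> real" where
  "affinity a = (\<integral>x. affinity_density a x \<partial>M)"

definition chernoff :: real where
  "chernoff = (SUP a\<in>{0..1}. - ln (affinity a))"

lemma measurable_affinity_density [measurable]: "affinity_density a \<in> borel_measurable M"
  unfolding affinity_density_def by measurable

lemma affinity_density_nonneg: "affinity_density a x \<ge> 0"
  using phi_nonneg by (simp add: affinity_density_def)

text \<open>It vanishes where \<open>p\<close> or \<open>q\<close> does, so that the truncation errors tend to \<open>0\<close> pointwise.\<close>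
definition affinity_majorant :: "'a \<Rightarrow> real" where
  "affinity_majorant x = (if p x > 0 \<and> q x > 0 then \<phi> x * (p x + q x) else 0)"

lemma measurable_affinity_majorant [measurable]: "affinity_majorant \<in> borel_measurable M"
  unfolding affinity_majorant_def by measurable

lemma affinity_majorant_nonneg: "affinity_majorant x \<ge> 0"
  using phi_nonneg p_nonneg q_nonneg by (simp add: affinity_majorant_def)

lemma integrable_affinity_majorant: "integrable M affinity_majorant"
proof (rule Bochner_Integration.integrable_bound)
  show "integrable M (\<lambda>x. \<phi> x * p x + \<phi> x * q x)"
    using integrable_phi_p integrable_phi_q by simp
  show "AE x in M. norm (affinity_majorant x) \<le> norm (\<phi> x * p x + \<phi> x * q x)"
    using phi_nonneg p_nonneg q_nonneg by (intro AE_I2) (auto simp: affinity_majorant_def distrib_left)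
qed measurable

lemma affinity_density_le_majorant:
  assumes "a \<in> {0..1}"
  shows "affinity_density a x \<le> affinity_majorant x"
proof (cases "p x > 0 \<and> q x > 0")
  case True
  define m where "m = max (p x) (q x)"
  have "m > 0" using True by (auto simp: m_def less_max_iff_disj)
  have "p x powr a * q x powr (1 - a) \<le> m powr a * m powr (1 - a)"
    using True assms by (intro mult_mono powr_mono2) (auto simp: m_def)
  also have "\<dots> \<le> p x + q x"
    using \<open>m > 0\<close> True by (simp add: m_def flip: powr_add)
  finally show ?thesis
    using True phi_nonneg[of x] by (simp add: affinity_density_def affinity_majorant_def mult_left_mono mult.assoc)
next
  case False
  then have "p x = 0 \<or> q x = 0" using p_nonneg[of x] q_nonneg[of x] by auto
  then show ?thesis using False by (auto simp: affinity_density_def affinity_majorant_def)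
qed

lemma integrable_affinity_density:
  assumes "a \<in> {0..1}"
  shows "integrable M (affinity_density a)"
proof (rule Bochner_Integration.integrable_bound[OF integrable_affinity_majorant])
  show "AE x in M. norm (affinity_density a x) \<le> norm (affinity_majorant x)"
    using affinity_density_le_majorant[OF assms] affinity_density_nonneg affinity_majorant_nonneg
    by (intro AE_I2) (simp add: abs_of_nonneg)
qed measurable

lemma affinity_nonneg: "affinity a \<ge> 0"
  unfolding affinity_def by (intro integral_nonneg_AE AE_I2 affinity_density_nonneg)

lemma overlap_le_affinity_power:
  assumes "a \<in> {0..1}"
  shows "overlap n \<le> affinity a ^ n"
proof -
  have "overlap_density n x \<le> (\<Prod>i<n. affinity_density a (x i))" for x
  proof -
    have "(\<Prod>i<n. affinity_density a (x i)) =
        tuple_weight \<phi> n x * (tuple_weight p n x powr a * tuple_weight q n x powr (1 - a))"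
      by (simp add: affinity_density_def tuple_weight_def prod.distrib prod_powr_distrib)
    then show ?thesis
      unfolding overlap_density_def using assms p_nonneg q_nonneg phi_nonneg
      by (simp add: mult_left_mono min_le_powr_mult_powr tuple_weight_nonneg)
  qed
  then have "overlap n \<le> (\<integral>x. (\<Prod>i<n. affinity_density a (x i)) \<partial>power_measure n)"
    unfolding overlap_def
    by (intro integral_mono integrable_overlap_density integrable_prod_components
        sigma_finite integrable_affinity_density assms)
  also have "\<dots> = affinity a ^ n"
    unfolding affinity_def by (rule integral_prod_components[OF sigma_finite integrable_affinity_density[OF assms]])
  finally show ?thesis .
qed

definition llr :: "'a \<Rightarrow> real" where
  "llr x = ln (p x) - ln (q x)"

definition trunc_set :: "real \<Rightarrow> 'a set" where
  "trunc_set K = {x \<in> space M. p x > 0 \<and> q x > 0 \<and> \<bar>llr x\<bar> \<le> K}"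

definition trunc_weight :: "real \<Rightarrow> 'a \<Rightarrow> real" where
  "trunc_weight K x = indicator (trunc_set K) x * (\<phi> x * q x)"

definition trunc_affinity :: "real \<Rightarrow> real \<Rightarrow> real" where
  "trunc_affinity K b = (\<integral>x. trunc_weight K x * exp (b * llr x) \<partial>M)"

definition trunc_affinity_deriv :: "real \<Rightarrow> real \<Rightarrow> real" where
  "trunc_affinity_deriv K b = (\<integral>x. trunc_weight K x * llr x * exp (b * llr x) \<partial>M)"

definition trunc_curvature :: "real \<Rightarrow> real" where
  "trunc_curvature K = K\<^sup>2 * exp (2 * K) * (\<integral>x. trunc_weight K x \<partial>M)"

lemma measurable_llr [measurable]: "llr \<in> borel_measurable M"
  unfolding llr_def by measurable

lemma sets_trunc_set [measurable]: "trunc_set K \<in> sets M"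
  unfolding trunc_set_def by measurable

lemma measurable_trunc_weight [measurable]: "trunc_weight K \<in> borel_measurable M"
  unfolding trunc_weight_def by measurable

lemma trunc_weight_nonneg: "trunc_weight K x \<ge> 0"
  using phi_nonneg q_nonneg by (simp add: trunc_weight_def)

lemma abs_llr_le: "x \<in> trunc_set K \<Longrightarrow> \<bar>llr x\<bar> \<le> K"
  by (simp add: trunc_set_def)

lemma mult_llr_le: "x \<in> trunc_set K \<Longrightarrow> b * llr x \<le> \<bar>b\<bar> * K"
  using abs_llr_le[of x K] by (metis abs_ge_self abs_ge_zero abs_mult mult_left_mono order_trans)

lemma abs_mult_llr_le:
  assumes "x \<in> trunc_set K" "\<bar>b\<bar> \<le> 1"
  shows "\<bar>b * llr x\<bar> \<le> K"
  using mult_mono[of "\<bar>b\<bar>" 1 "\<bar>llr x\<bar>" K] abs_llr_le[OF assms(1)] assms(2) by (simp add: abs_mult)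

lemma p_eq_q_mult_exp_llr: "p x > 0 \<Longrightarrow> q x > 0 \<Longrightarrow> p x = q x * exp (llr x)"
  by (simp add: llr_def exp_diff)

lemma affinity_density_eq_on_trunc_set:
  assumes "x \<in> trunc_set K"
  shows "affinity_density b x = trunc_weight K x * exp (b * llr x)"
proof -
  have "p x > 0" "q x > 0" using assms by (auto simp: trunc_set_def)
  then have "p x powr b * q x powr (1 - b) = exp (ln (q x) + b * llr x)"
    by (simp add: powr_def llr_def algebra_simps flip: exp_add)
  also have "\<dots> = q x * exp (b * llr x)" using \<open>q x > 0\<close> by (simp add: exp_add)
  finally show ?thesis using assms by (simp add: affinity_density_def trunc_weight_def mult.assoc)
qed

lemma integrable_trunc_weight_mult:
  assumes [measurable]: "h \<in> borel_measurable M" and bound: "\<And>x. x \<in> trunc_set K \<Longrightarrow> \<bar>h x\<bar> \<le> c"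
  shows "integrable M (\<lambda>x. trunc_weight K x * h x)"
proof (rule Bochner_Integration.integrable_bound)
  show "integrable M (\<lambda>x. c * (\<phi> x * q x))" using integrable_phi_q by simp
  have "\<bar>trunc_weight K x * h x\<bar> \<le> \<bar>c * (\<phi> x * q x)\<bar>" for x
  proof (cases "x \<in> trunc_set K")
    case True
    have "\<phi> x * q x * \<bar>h x\<bar> \<le> \<phi> x * q x * \<bar>c\<bar>"
      using bound[OF True] phi_nonneg[of x] q_nonneg[of x] by (intro mult_left_mono) auto
    then show ?thesis using True phi_nonneg[of x] q_nonneg[of x] by (simp add: trunc_weight_def abs_mult mult_ac)
  qed (simp add: trunc_weight_def)
  then show "AE x in M. norm (trunc_weight K x * h x) \<le> norm (c * (\<phi> x * q x))" by simp
qed measurable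

lemma integrable_trunc_weight: "integrable M (trunc_weight K)"
  using integrable_trunc_weight_mult[of "\<lambda>_. 1" K 1] by simp

lemma integrable_trunc_affinity_integrand:
  "integrable M (\<lambda>x. trunc_weight K x * exp (b * llr x))"
  using mult_llr_le by (intro integrable_trunc_weight_mult[where c = "exp (\<bar>b\<bar> * K)"]) auto

lemma integrable_trunc_affinity_deriv_integrand:
  "integrable M (\<lambda>x. trunc_weight K x * llr x * exp (b * llr x))"
proof -
  have "\<bar>llr x * exp (b * llr x)\<bar> \<le> K * exp (\<bar>b\<bar> * K)" if "x \<in> trunc_set K" for x
    using abs_llr_le[OF that] mult_llr_le[OF that, of b] by (simp add: abs_mult mult_mono)
  then have "integrable M (\<lambda>x. trunc_weight K x * (llr x * exp (b * llr x)))"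
    by (intro integrable_trunc_weight_mult) auto
  then show ?thesis by (simp add: mult.assoc)
qed

lemma trunc_affinity_nonneg: "trunc_affinity K b \<ge> 0"
  unfolding trunc_affinity_def by (intro integral_nonneg_AE AE_I2) (simp add: trunc_weight_nonneg)

lemma trunc_curvature_nonneg: "trunc_curvature K \<ge> 0"
  unfolding trunc_curvature_def by (intro mult_nonneg_nonneg integral_nonneg_AE AE_I2 trunc_weight_nonneg) auto

lemma trunc_affinity_le_affinity:
  assumes "a \<in> {0..1}"
  shows "trunc_affinity K a \<le> affinity a"
  unfolding trunc_affinity_def affinity_def
proof (intro integral_mono integrable_trunc_affinity_integrand integrable_affinity_density assms)
  show "trunc_weight K x * exp (a * llr x) \<le> affinity_density a x" for x
    using affinity_density_eq_on_trunc_set[of x K a] affinity_density_nonneg[of a x]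
    by (cases "x \<in> trunc_set K") (auto simp: trunc_weight_def)
qed

lemma trunc_affinity_ge:
  assumes "\<bar>b\<bar> \<le> 1"
  shows "exp (- K) * (\<integral>x. trunc_weight K x \<partial>M) \<le> trunc_affinity K b"
proof -
  have "exp (- K) * trunc_weight K x \<le> trunc_weight K x * exp (b * llr x)" for x
  proof (cases "x \<in> trunc_set K")
    case True
    then have "- K \<le> b * llr x" using abs_mult_llr_le[OF True assms] by linarith
    then show ?thesis
      using mult_right_mono[of "exp (- K)" "exp (b * llr x)" "trunc_weight K x"] trunc_weight_nonneg[of K x]
      by (simp add: mult.commute)
  qed (simp add: trunc_weight_def)
  then have "(\<integral>x. exp (- K) * trunc_weight K x \<partial>M) \<le> trunc_affinity K b"
    unfolding trunc_affinity_def
    by (intro integral_mono integrable_mult_right integrable_trunc_weight integrable_trunc_affinity_integrand)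
  then show ?thesis by simp
qed

lemma convex_on_trunc_affinity: "convex_on UNIV (trunc_affinity K)"
proof (rule convex_onI)
  fix t b c :: real
  assume t: "0 < t" "t < 1"
  have "trunc_weight K x * exp (((1 - t) *\<^sub>R b + t *\<^sub>R c) * llr x) \<le>
      (1 - t) * (trunc_weight K x * exp (b * llr x)) + t * (trunc_weight K x * exp (c * llr x))" for x
  proof -
    have "exp ((1 - t) *\<^sub>R (b * llr x) + t *\<^sub>R (c * llr x)) \<le>
        (1 - t) * exp (b * llr x) + t * exp (c * llr x)"
      using convex_onD[OF exp_convex, of t "b * llr x" "c * llr x"] t by simp
    then have "trunc_weight K x * exp (((1 - t) * b + t * c) * llr x) \<le>
        trunc_weight K x * ((1 - t) * exp (b * llr x) + t * exp (c * llr x))"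
      by (intro mult_left_mono trunc_weight_nonneg) (simp add: algebra_simps)
    then show ?thesis by (simp add: algebra_simps)
  qed
  then have "trunc_affinity K ((1 - t) *\<^sub>R b + t *\<^sub>R c) \<le>
      (\<integral>x. (1 - t) * (trunc_weight K x * exp (b * llr x)) + t * (trunc_weight K x * exp (c * llr x)) \<partial>M)"
    unfolding trunc_affinity_def
    by (intro integral_mono Bochner_Integration.integrable_add integrable_mult_right
        integrable_trunc_affinity_integrand)
  also have "\<dots> = (1 - t) * trunc_affinity K b + t * trunc_affinity K c"
    by (simp add: trunc_affinity_def integrable_trunc_affinity_integrand)
  finally show "trunc_affinity K ((1 - t) *\<^sub>R b + t *\<^sub>R c) \<le>
      (1 - t) * trunc_affinity K b + t * trunc_affinity K c" .
qed simp

lemma continuous_on_trunc_affinity: "continuous_on A (trunc_affinity K)"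
  using convex_on_continuous[OF open_UNIV convex_on_trunc_affinity] continuous_on_subset by blast

lemma trunc_affinity_taylor:
  assumes "\<bar>b\<bar> \<le> 1" "\<bar>t\<bar> \<le> 1"
  shows "\<bar>trunc_affinity K (b + t) - trunc_affinity K b - t * trunc_affinity_deriv K b\<bar>
    \<le> t\<^sup>2 * trunc_curvature K"
proof -
  let ?f = "\<lambda>b x. trunc_weight K x * exp (b * llr x)"
  let ?r = "\<lambda>x. ?f (b + t) x - ?f b x - t * (trunc_weight K x * llr x * exp (b * llr x))"
  have pointwise: "\<bar>?r x\<bar> \<le> t\<^sup>2 * (K\<^sup>2 * exp (2 * K)) * trunc_weight K x" for x
  proof (cases "x \<in> trunc_set K")
    case True
    have "\<bar>t * llr x\<bar> \<le> K" "exp (b * llr x) \<le> exp K"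
      using abs_mult_llr_le[OF True assms(2)] abs_mult_llr_le[OF True assms(1)] by (simp_all add: abs_le_iff)
    have "?r x = trunc_weight K x * exp (b * llr x) * (exp (t * llr x) - 1 - t * llr x)"
      by (simp add: algebra_simps flip: exp_add)
    then have "\<bar>?r x\<bar> = trunc_weight K x * exp (b * llr x) * \<bar>exp (t * llr x) - 1 - t * llr x\<bar>"
      using trunc_weight_nonneg[of K x] by (simp add: abs_mult)
    also have "\<dots> \<le> trunc_weight K x * exp K * ((t * llr x)\<^sup>2 * exp K)"
    proof (intro mult_mono mult_left_mono trunc_weight_nonneg)
      show "\<bar>exp (t * llr x) - 1 - t * llr x\<bar> \<le> (t * llr x)\<^sup>2 * exp K"
        using abs_exp_minus_one_minus_le[of "t * llr x"] \<open>\<bar>t * llr x\<bar> \<le> K\<close>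
        by (meson exp_le_cancel_iff mult_left_mono order_trans zero_le_power2)
    qed (use \<open>exp (b * llr x) \<le> exp K\<close> trunc_weight_nonneg in auto)
    also have "\<dots> \<le> trunc_weight K x * exp K * ((t\<^sup>2 * K\<^sup>2) * exp K)"
    proof -
      have "(t * llr x)\<^sup>2 \<le> t\<^sup>2 * K\<^sup>2"
        using abs_llr_le[OF True] by (simp add: power_mult_distrib mult_left_mono power_mono abs_le_square_iff[symmetric])
      then show ?thesis using trunc_weight_nonneg[of K x] by (intro mult_left_mono mult_right_mono) auto
    qed
    also have "\<dots> = t\<^sup>2 * (K\<^sup>2 * exp (2 * K)) * trunc_weight K x"
      by (simp add: algebra_simps flip: exp_add)
    finally show ?thesis .
  qed (simp add: trunc_weight_def)
  have "\<bar>trunc_affinity K (b + t) - trunc_affinity K b - t * trunc_affinity_deriv K b\<bar> = \<bar>\<integral>x. ?r x \<partial>M\<bar>"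
    by (simp add: trunc_affinity_def trunc_affinity_deriv_def integrable_trunc_affinity_integrand
        integrable_trunc_affinity_deriv_integrand)
  also have "\<dots> \<le> (\<integral>x. t\<^sup>2 * (K\<^sup>2 * exp (2 * K)) * trunc_weight K x \<partial>M)"
    by (intro integral_abs_bound[THEN order_trans] integral_mono pointwise integrable_mult_right
        integrable_trunc_weight Bochner_Integration.integrable_abs Bochner_Integration.integrable_diff
        integrable_trunc_affinity_integrand integrable_trunc_affinity_deriv_integrand)
  also have "\<dots> = t\<^sup>2 * trunc_curvature K"
    by (simp add: trunc_curvature_def mult.assoc)
  finally show ?thesis .
qed

lemma trunc_affinity_le_taylor:
  assumes "\<bar>b\<bar> \<le> 1" "\<bar>t\<bar> \<le> 1"
  shows "trunc_affinity K (b + t) \<le>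
    trunc_affinity K b + t * trunc_affinity_deriv K b + t\<^sup>2 * trunc_curvature K"
  using trunc_affinity_taylor[OF assms, of K] by (simp add: abs_le_iff)

lemma trunc_affinity_first_order:
  assumes \<alpha>: "\<alpha> \<in> {0..1}"
    and min: "\<And>b. b \<in> {0..1} \<Longrightarrow> trunc_affinity K \<alpha> \<le> trunc_affinity K b"
  shows "\<alpha> * trunc_affinity_deriv K \<alpha> \<le> 0" and "0 \<le> (1 - \<alpha>) * trunc_affinity_deriv K \<alpha>"
proof -
  let ?d = "trunc_affinity_deriv K \<alpha>" and ?C = "trunc_curvature K"
  have taylor: "trunc_affinity K (\<alpha> + t) \<le> trunc_affinity K \<alpha> + t * ?d + t\<^sup>2 * ?C" if "\<bar>t\<bar> \<le> 1" for t
    using trunc_affinity_le_taylor[OF _ that] \<alpha> by simp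
  show "\<alpha> * ?d \<le> 0"
  proof (cases "\<alpha> = 0")
    case False
    have "0 \<le> - ?d"
    proof (rule nonneg_slope_at_right_min[where f = "\<lambda>b. trunc_affinity K (- b)" and a = "- \<alpha>" and \<tau> = \<alpha>])
      show "\<alpha> > 0" using \<alpha> False by simp
    next
      fix t assume "0 < t" "t \<le> \<alpha>"
      then show "trunc_affinity K (- (- \<alpha>)) \<le> trunc_affinity K (- (- \<alpha> + t))"
        using min[of "\<alpha> - t"] \<alpha> by simp
      show "trunc_affinity K (- (- \<alpha> + t)) \<le> trunc_affinity K (- (- \<alpha>)) + t * (- ?d) + t\<^sup>2 * ?C"
        using taylor[of "- t"] \<open>0 < t\<close> \<open>t \<le> \<alpha>\<close> \<alpha> by simp
    qed
    then show ?thesis using \<alpha> by (simp add: mult_nonneg_nonpos)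
  qed simp
  show "0 \<le> (1 - \<alpha>) * ?d"
  proof (cases "\<alpha> = 1")
    case False
    have "0 \<le> ?d"
    proof (rule nonneg_slope_at_right_min[where f = "trunc_affinity K" and a = \<alpha> and \<tau> = "1 - \<alpha>"])
      show "1 - \<alpha> > 0" using \<alpha> False by simp
    next
      fix t assume "0 < t" "t \<le> 1 - \<alpha>"
      then show "trunc_affinity K \<alpha> \<le> trunc_affinity K (\<alpha> + t)"
        using min[of "\<alpha> + t"] \<alpha> by simp
      show "trunc_affinity K (\<alpha> + t) \<le> trunc_affinity K \<alpha> + t * ?d + t\<^sup>2 * ?C"
        using taylor[of t] \<open>0 < t\<close> \<open>t \<le> 1 - \<alpha>\<close> \<alpha> by simp
    qed
    then show ?thesis using \<alpha> by simp
  qed simp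
qed

lemma trunc_affinity_perturb_le:
  assumes \<alpha>: "\<alpha> \<in> {0..1}"
    and min: "\<And>b. b \<in> {0..1} \<Longrightarrow> trunc_affinity K \<alpha> \<le> trunc_affinity K b"
    and h: "0 < h" "h \<le> 1"
  shows "trunc_affinity K (\<alpha> * (1 + h)) \<le> trunc_affinity K \<alpha> + h\<^sup>2 * trunc_curvature K"
    and "trunc_affinity K (\<alpha> - (1 - \<alpha>) * h) \<le> trunc_affinity K \<alpha> + h\<^sup>2 * trunc_curvature K"
proof -
  let ?d = "trunc_affinity_deriv K \<alpha>" and ?C = "trunc_curvature K"
  have step: "trunc_affinity K (\<alpha> + t) \<le> trunc_affinity K \<alpha> + h\<^sup>2 * ?C"
    if "\<bar>t\<bar> \<le> h" "t * ?d \<le> 0" for t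
  proof -
    have "t\<^sup>2 * ?C \<le> h\<^sup>2 * ?C"
      using that(1) trunc_curvature_nonneg by (intro mult_right_mono) (auto simp: abs_le_square_iff[symmetric])
    then show ?thesis
      using trunc_affinity_le_taylor[of \<alpha> t K] that \<alpha> h by simp
  qed
  have "\<bar>\<alpha> * h\<bar> \<le> h" using \<alpha> h by (simp add: abs_mult mult_left_le_one_le)
  moreover have "(\<alpha> * h) * ?d \<le> 0"
    using trunc_affinity_first_order(1)[OF \<alpha> min] h
    by (metis mult.commute mult.left_commute mult_nonpos_nonneg less_imp_le)
  ultimately show "trunc_affinity K (\<alpha> * (1 + h)) \<le> trunc_affinity K \<alpha> + h\<^sup>2 * ?C"
    using step[of "\<alpha> * h"] by (simp add: algebra_simps)
  have "\<bar>- ((1 - \<alpha>) * h)\<bar> \<le> h" using \<alpha> h by (simp add: abs_mult mult_left_le_one_le)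
  moreover have "(- ((1 - \<alpha>) * h)) * ?d \<le> 0"
    using trunc_affinity_first_order(2)[OF \<alpha> min] h
    by (metis minus_mult_left mult.commute mult.left_commute mult_nonneg_nonneg neg_le_0_iff_le less_imp_le)
  ultimately show "trunc_affinity K (\<alpha> - (1 - \<alpha>) * h) \<le> trunc_affinity K \<alpha> + h\<^sup>2 * ?C"
    using step[of "- ((1 - \<alpha>) * h)"] by (simp add: algebra_simps)
qed

lemma prod_trunc_affinity_integrand:
  fixes n :: nat
  assumes "\<forall>i<n. x i \<in> trunc_set K"
  shows "(\<Prod>i<n. trunc_weight K (x i) * exp (b * llr (x i))) =
    (\<Prod>i<n. \<phi> (x i) * q (x i)) * exp (b * (\<Sum>i<n. llr (x i)))"
proof -
  have "(\<Prod>i<n. trunc_weight K (x i) * exp (b * llr (x i))) =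
      (\<Prod>i<n. \<phi> (x i) * q (x i) * exp (b * llr (x i)))"
    using assms by (intro prod.cong) (auto simp: trunc_weight_def)
  also have "\<dots> = (\<Prod>i<n. \<phi> (x i) * q (x i)) * (\<Prod>i<n. exp (b * llr (x i)))"
    by (rule prod.distrib)
  also have "(\<Prod>i<n. exp (b * llr (x i))) = exp (b * (\<Sum>i<n. llr (x i)))"
    by (simp add: exp_sum sum_distrib_left)
  finally show ?thesis .
qed

lemma overlap_density_on_trunc_set:
  assumes "\<forall>i<n. x i \<in> trunc_set K"
  shows "overlap_density n x = (\<Prod>i<n. \<phi> (x i) * q (x i)) * min (exp (\<Sum>i<n. llr (x i))) 1"
proof -
  have "tuple_weight p n x = (\<Prod>i<n. q (x i) * exp (llr (x i)))"
    unfolding tuple_weight_def using assms p_eq_q_mult_exp_llr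
    by (intro prod.cong) (auto simp: trunc_set_def)
  also have "\<dots> = tuple_weight q n x * exp (\<Sum>i<n. llr (x i))"
    by (simp add: tuple_weight_def prod.distrib exp_sum)
  finally have "min (tuple_weight p n x) (tuple_weight q n x) =
      tuple_weight q n x * min (exp (\<Sum>i<n. llr (x i))) 1"
    using tuple_weight_nonneg[of q n x, OF q_nonneg] by (simp add: min_mult_distrib_left)
  then show ?thesis by (simp add: overlap_density_def tuple_weight_mult[symmetric] mult.assoc)
qed

lemma prod_trunc_affinity_integrand_le:
  assumes "A > 0" "h > 0"
  shows "(\<Prod>i<n. trunc_weight K (x i) * exp (a * llr (x i))) \<le> A * overlap_density n x +
    A powr (- h) * ((\<Prod>i<n. trunc_weight K (x i) * exp (a * (1 + h) * llr (x i))) +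
                    (\<Prod>i<n. trunc_weight K (x i) * exp ((a - (1 - a) * h) * llr (x i))))"
proof (cases "\<forall>i<n. x i \<in> trunc_set K")
  case True
  define G where "G = (\<Prod>i<n. \<phi> (x i) * q (x i))"
  define L where "L = (\<Sum>i<n. llr (x i))"
  have "G \<ge> 0" unfolding G_def using phi_nonneg q_nonneg by (intro prod_nonneg) auto
  then have "G * exp (a * L) \<le> G * (A * min (exp L) 1 +
      A powr (- h) * (exp (a * (1 + h) * L) + exp ((a - (1 - a) * h) * L)))"
    using exp_mult_le_min_add_powr[OF assms] by (intro mult_left_mono) auto
  then show ?thesis
    unfolding prod_trunc_affinity_integrand[OF True] overlap_density_on_trunc_set[OF True]
      G_def[symmetric] L_def[symmetric]
    by (simp add: algebra_simps)
next
  case False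
  then obtain i where "i < n" "x i \<notin> trunc_set K" by auto
  then have "(\<Prod>i<n. trunc_weight K (x i) * exp (a * llr (x i))) = 0"
    by (intro prod_zero bexI[of _ i]) (auto simp: trunc_weight_def)
  moreover have "0 \<le> A * overlap_density n x +
    A powr (- h) * ((\<Prod>i<n. trunc_weight K (x i) * exp (a * (1 + h) * llr (x i))) +
                    (\<Prod>i<n. trunc_weight K (x i) * exp ((a - (1 - a) * h) * llr (x i))))"
    using assms overlap_density_nonneg trunc_weight_nonneg
    by (intro add_nonneg_nonneg mult_nonneg_nonneg prod_nonneg) auto
  ultimately show ?thesis by linarith
qed

lemma trunc_affinity_power_le:
  assumes "A > 0" "h > 0"
  shows "trunc_affinity K a ^ n \<le> A * overlap n +
    A powr (- h) * (trunc_affinity K (a * (1 + h)) ^ n + trunc_affinity K (a - (1 - a) * h) ^ n)"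
proof -
  let ?f = "\<lambda>b x. \<Prod>i<n. trunc_weight K (x i) * exp (b * llr (x i))"
  have integrable: "integrable (power_measure n) (?f b)" for b
    by (rule integrable_prod_components[OF sigma_finite integrable_trunc_affinity_integrand])
  have integral: "(\<integral>x. ?f b x \<partial>power_measure n) = trunc_affinity K b ^ n" for b
    unfolding trunc_affinity_def
    by (rule integral_prod_components[OF sigma_finite integrable_trunc_affinity_integrand])
  have "trunc_affinity K a ^ n \<le> (\<integral>x. A * overlap_density n x +
      A powr (- h) * (?f (a * (1 + h)) x + ?f (a - (1 - a) * h) x) \<partial>power_measure n)"
    unfolding integral[symmetric]
    by (intro integral_mono prod_trunc_affinity_integrand_le[OF assms] integrable
        integrable_overlap_density Bochner_Integration.integrable_add integrable_mult_right)
  also have "\<dots> = A * overlap n +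
      A powr (- h) * (trunc_affinity K (a * (1 + h)) ^ n + trunc_affinity K (a - (1 - a) * h) ^ n)"
    by (simp add: integrable integrable_overlap_density integral overlap_def)
  finally show ?thesis .
qed

lemma eventually_overlap_ge_trunc_affinity:
  assumes "(\<integral>x. trunc_weight K x \<partial>M) > 0" "\<epsilon> > 0"
  shows "\<exists>\<alpha>\<in>{0..1}. \<forall>\<^sub>F n in sequentially. exp (real n * (ln (trunc_affinity K \<alpha>) - \<epsilon>)) \<le> overlap n"
proof -
  obtain \<alpha> where \<alpha>: "\<alpha> \<in> {0..1}" and min: "\<And>b. b \<in> {0..1} \<Longrightarrow> trunc_affinity K \<alpha> \<le> trunc_affinity K b"
    using continuous_attains_inf[of "{0..1::real}" "trunc_affinity K"] continuous_on_trunc_affinity by auto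
  define \<rho> where "\<rho> = trunc_affinity K \<alpha>"
  define C where "C = trunc_curvature K"
  have "0 < exp (- K) * (\<integral>x. trunc_weight K x \<partial>M)" using assms(1) by simp
  also have "\<dots> \<le> \<rho>" unfolding \<rho>_def using \<alpha> by (intro trunc_affinity_ge) auto
  finally have "\<rho> > 0" .
  have "C \<ge> 0" unfolding C_def by (rule trunc_curvature_nonneg)
  define h where "h = min 1 (\<epsilon> * \<rho> / (4 * (C + 1)))"
  have h: "0 < h" "h \<le> 1" using \<open>\<rho> > 0\<close> \<open>C \<ge> 0\<close> assms(2) by (auto simp: h_def)
  have "h * C \<le> \<epsilon> * \<rho> / (4 * (C + 1)) * (C + 1)"
    using \<open>C \<ge> 0\<close> h by (intro mult_mono) (auto simp: h_def)
  also have "\<dots> = \<epsilon> * \<rho> / 4" using \<open>C \<ge> 0\<close> by (simp add: field_simps)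
  finally have "h\<^sup>2 * C \<le> h * (\<epsilon> * \<rho> / 4)"
    using h by (simp add: power2_eq_square mult.assoc mult_left_mono)
  moreover have "\<rho> * (1 + h * \<epsilon> / 4) \<le> \<rho> * exp (h * \<epsilon> / 4)"
    using \<open>\<rho> > 0\<close> by (intro mult_left_mono exp_ge_add_one_self) auto
  ultimately have bound: "\<rho> + h\<^sup>2 * C \<le> \<rho> * exp (h * \<epsilon> / 4)" by (simp add: algebra_simps)
  have "\<forall>\<^sub>F n in sequentially. exp (real n * (ln \<rho> - \<epsilon>)) \<le> overlap n"
  proof (rule eventually_exp_le_of_split_bound[OF \<open>\<rho> > 0\<close> h(1) assms(2)])
    show "trunc_affinity K (\<alpha> * (1 + h)) \<le> \<rho> * exp (h * \<epsilon> / 4)"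
      and "trunc_affinity K (\<alpha> - (1 - \<alpha>) * h) \<le> \<rho> * exp (h * \<epsilon> / 4)"
      using trunc_affinity_perturb_le[OF \<alpha> min h] bound unfolding \<rho>_def C_def by linarith+
    show "\<rho> ^ n \<le> A * overlap n + A powr (- h) *
        (trunc_affinity K (\<alpha> * (1 + h)) ^ n + trunc_affinity K (\<alpha> - (1 - \<alpha>) * h) ^ n)"
      if "A > 0" for A n
      unfolding \<rho>_def using that h(1) by (rule trunc_affinity_power_le)
  qed (rule trunc_affinity_nonneg)+
  then show ?thesis using \<alpha> unfolding \<rho>_def by blast
qed

lemma truncation_error_le:
  assumes "a \<in> {0..1}"
  shows "affinity_density a x - trunc_weight K x * exp (a * llr x)
    \<le> (1 - indicator (trunc_set K) x) * affinity_majorant x"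
  using affinity_density_eq_on_trunc_set[of x K a] affinity_density_le_majorant[OF assms, of x]
  by (cases "x \<in> trunc_set K") (auto simp: trunc_weight_def)

lemma truncation_tail_tendsto_zero:
  "(\<lambda>k. \<integral>x. (1 - indicator (trunc_set (real k)) x) * affinity_majorant x \<partial>M) \<longlonglongrightarrow> 0"
proof -
  have "(\<lambda>k. \<integral>x. (1 - indicator (trunc_set (real k)) x) * affinity_majorant x \<partial>M)
      \<longlonglongrightarrow> (\<integral>x. 0 \<partial>M)"
  proof (rule integral_dominated_convergence[where w = affinity_majorant])
    show "AE x in M. (\<lambda>k. (1 - indicator (trunc_set (real k)) x) * affinity_majorant x) \<longlonglongrightarrow> 0"
    proof (rule AE_I2)
      fix x assume "x \<in> space M"
      show "(\<lambda>k. (1 - indicator (trunc_set (real k)) x) * affinity_majorant x) \<longlonglongrightarrow> 0"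
      proof (cases "p x > 0 \<and> q x > 0")
        case True
        have "\<forall>\<^sub>F k in sequentially. \<bar>llr x\<bar> \<le> real k"
          using filterlim_real_sequentially by (simp add: filterlim_at_top)
        then have "\<forall>\<^sub>F k in sequentially. (1 - indicator (trunc_set (real k)) x) * affinity_majorant x = 0"
          by eventually_elim (use True \<open>x \<in> space M\<close> in \<open>simp add: trunc_set_def\<close>)
        then show ?thesis by (rule tendsto_eventually)
      qed (auto simp: affinity_majorant_def)
    qed
    show "AE x in M. norm ((1 - indicator (trunc_set (real k)) x) * affinity_majorant x) \<le> affinity_majorant x"
      for k
      using phi_nonneg p_nonneg q_nonneg
      by (intro AE_I2) (auto simp: indicator_def affinity_majorant_def)
  qed (simp_all add: integrable_affinity_majorant)
  then show ?thesis by simp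
qed

lemma integrable_truncation_tail:
  "integrable M (\<lambda>x. (1 - indicator (trunc_set K) x) * affinity_majorant x)"
proof -
  have "integrable M (\<lambda>x. affinity_majorant x - affinity_majorant x * indicator (trunc_set K) x)"
    using integrable_affinity_majorant
      integrable_real_mult_indicator[OF sets_trunc_set integrable_affinity_majorant]
    by (rule Bochner_Integration.integrable_diff)
  then show ?thesis by (simp add: algebra_simps)
qed

lemma trunc_affinity_uniform_approx:
  assumes "\<delta> > 0"
  shows "\<exists>K. \<forall>a\<in>{0..1}. affinity a - trunc_affinity K a \<le> \<delta>"
proof -
  obtain k where k: "(\<integral>x. (1 - indicator (trunc_set (real k)) x) * affinity_majorant x \<partial>M) < \<delta>"
    using order_tendstoD(2)[OF truncation_tail_tendsto_zero assms] eventually_sequentially by auto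
  have "affinity a - trunc_affinity (real k) a \<le> \<delta>" if "a \<in> {0..1}" for a
  proof -
    have "affinity a - trunc_affinity (real k) a =
        (\<integral>x. affinity_density a x - trunc_weight (real k) x * exp (a * llr x) \<partial>M)"
      using integrable_affinity_density[OF that] integrable_trunc_affinity_integrand
      by (simp add: affinity_def trunc_affinity_def)
    also have "\<dots> \<le> (\<integral>x. (1 - indicator (trunc_set (real k)) x) * affinity_majorant x \<partial>M)"
      by (intro integral_mono truncation_error_le that Bochner_Integration.integrable_diff
          integrable_affinity_density integrable_trunc_affinity_integrand integrable_truncation_tail)
    finally show ?thesis using k by linarith
  qed
  then show ?thesis by blast
qed

lemma rho_w_eq_affinity:
  assumes "a \<in> {0..1}"
  shows "rho_w M \<phi> p q a = ennreal (affinity a)"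
  unfolding rho_w_def affinity_def affinity_density_def[symmetric]
  using integrable_affinity_density[OF assms] affinity_density_nonneg
  by (intro nn_integral_eq_integral) auto

lemma chernoff_w_eq_chernoff: "chernoff_w M \<phi> p q = chernoff"
  unfolding chernoff_w_def chernoff_def
  by (intro SUP_cong) (auto simp: rho_w_eq_affinity affinity_nonneg)

end

locale positive_affinity = weighted_densities +
  assumes affinity_pos: "\<And>a. a \<in> {0..1} \<Longrightarrow> affinity a > 0"
begin

lemma affinity_uniformly_pos: "\<exists>c>0. \<forall>a\<in>{0..1}. c \<le> affinity a"
proof -
  have "affinity 0 / 2 > 0" using affinity_pos[of 0] by simp
  then obtain K where K: "\<And>a. a \<in> {0..1} \<Longrightarrow> affinity a - trunc_affinity K a \<le> affinity 0 / 2"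
    using trunc_affinity_uniform_approx by blast
  have "(\<integral>x. trunc_weight K x \<partial>M) > 0"
    using K[of 0] affinity_pos[of 0] by (simp add: trunc_affinity_def)
  moreover have "exp (- K) * (\<integral>x. trunc_weight K x \<partial>M) \<le> affinity a" if "a \<in> {0..1}" for a
  proof -
    have "\<bar>a\<bar> \<le> 1" using that by simp
    then show ?thesis using trunc_affinity_ge trunc_affinity_le_affinity[OF that] by (meson order_trans)
  qed
  ultimately show ?thesis by (intro exI[of _ "exp (- K) * (\<integral>x. trunc_weight K x \<partial>M)"]) auto
qed

lemma bdd_above_neg_ln_affinity: "bdd_above ((\<lambda>a. - ln (affinity a)) ` {0..1})"
proof -
  obtain c where "c > 0" "\<And>a. a \<in> {0..1} \<Longrightarrow> c \<le> affinity a"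
    using affinity_uniformly_pos by blast
  then show ?thesis by (intro bdd_aboveI2[of _ _ "- ln c"]) (simp add: affinity_pos)
qed

lemma neg_chernoff_le_ln_affinity: "a \<in> {0..1} \<Longrightarrow> - chernoff \<le> ln (affinity a)"
  using cSUP_upper[OF _ bdd_above_neg_ln_affinity] by (force simp: chernoff_def)

lemma overlap_le_exp_chernoff:
  assumes "\<epsilon> > 0"
  shows "overlap n \<le> exp (real n * (\<epsilon> - chernoff))"
proof -
  obtain a where a: "a \<in> {0..1}" "chernoff - \<epsilon> < - ln (affinity a)"
    using less_cSUP_iff[OF _ bdd_above_neg_ln_affinity, of "chernoff - \<epsilon>"] assms
    by (auto simp: chernoff_def)
  have "overlap n \<le> affinity a ^ n" by (rule overlap_le_affinity_power[OF a(1)])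
  also have "\<dots> = exp (real n * ln (affinity a))"
    using affinity_pos[OF a(1)] by (simp add: exp_of_nat_mult)
  also have "\<dots> \<le> exp (real n * (\<epsilon> - chernoff))"
    using a(2) by (intro exp_mono mult_left_mono) auto
  finally show ?thesis .
qed

lemma eventually_overlap_ge_exp_chernoff:
  assumes "\<epsilon> > 0"
  shows "\<forall>\<^sub>F n in sequentially. exp (real n * (- chernoff - \<epsilon>)) \<le> overlap n"
proof -
  define \<delta> where "\<delta> = exp (- chernoff) * (1 - exp (- (\<epsilon> / 2)))"
  have "\<delta> > 0" using assms by (simp add: \<delta>_def)
  then have "min \<delta> (affinity 0 / 2) > 0" using affinity_pos[of 0] by simp
  then obtain K
    where K: "\<And>a. a \<in> {0..1} \<Longrightarrow> affinity a - trunc_affinity K a \<le> min \<delta> (affinity 0 / 2)"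
    using trunc_affinity_uniform_approx by blast
  have "(\<integral>x. trunc_weight K x \<partial>M) > 0"
    using K[of 0] affinity_pos[of 0] by (simp add: trunc_affinity_def)
  then obtain \<alpha> where \<alpha>: "\<alpha> \<in> {0..1}"
    and ev: "\<forall>\<^sub>F n in sequentially. exp (real n * (ln (trunc_affinity K \<alpha>) - \<epsilon> / 2)) \<le> overlap n"
    using eventually_overlap_ge_trunc_affinity[of K "\<epsilon> / 2"] assms by auto
  have "exp (- chernoff - \<epsilon> / 2) = exp (- chernoff) - \<delta>"
    by (simp add: \<delta>_def algebra_simps flip: exp_add)
  also have "\<dots> \<le> affinity \<alpha> - \<delta>"
    using neg_chernoff_le_ln_affinity[OF \<alpha>] affinity_pos[OF \<alpha>] by (simp add: ln_ge_iff)
  also have "\<dots> \<le> trunc_affinity K \<alpha>" using K[OF \<alpha>] by simp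
  finally have "- chernoff - \<epsilon> / 2 \<le> ln (trunc_affinity K \<alpha>)"
    by (metis exp_gt_zero less_le_trans ln_ge_iff)
  then have "real n * (- chernoff - \<epsilon>) \<le> real n * (ln (trunc_affinity K \<alpha>) - \<epsilon> / 2)" for n
    by (intro mult_left_mono) auto
  with ev show ?thesis by (elim eventually_mono) (meson exp_le_cancel_iff order_trans)
qed

lemma overlap_exp_chernoff:
  "\<exists>e :: nat \<Rightarrow> real. e \<in> o(\<lambda>n. real n) \<and>
    (\<forall>\<^sub>F n in sequentially. overlap n = exp (- real n * chernoff + e n))"
  using overlap_le_exp_chernoff eventually_overlap_ge_exp_chernoff
  by (intro exp_little_o_of_exp_bounds) auto

end

theorem corollary3p2:
  fixes M :: "'a::polish_space measure"
    and p q \<phi> :: "'a \<Rightarrow> real"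
  assumes "sigma_finite_measure M"
    and "sets M = sets borel"
    and "p \<in> borel_measurable M" and "q \<in> borel_measurable M" and "\<phi> \<in> borel_measurable M"
    and "\<And>x. p x \<ge> 0" and "\<And>x. q x \<ge> 0" and "\<And>x. \<phi> x \<ge> 0"
    and "(\<integral>\<^sup>+x. ennreal (p x) \<partial>M) = 1" and "(\<integral>\<^sup>+x. ennreal (q x) \<partial>M) = 1"
    and "AE x in M. p x > 0" and "AE x in M. q x > 0"
    and "\<And>\<alpha>. \<alpha> \<in> {0..1} \<Longrightarrow> 0 < rho_w M \<phi> p q \<alpha> \<and> rho_w M \<phi> p q \<alpha> < \<infinity>"
  shows "\<exists>e :: nat \<Rightarrow> real. e \<in> o(\<lambda>n. real n) \<and>
    (\<forall>\<^sub>F n in sequentially. TV_phi M \<phi> p q n =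
        (1/2) * ((E_phi M \<phi> p) ^ n + (E_phi M \<phi> q) ^ n)
        - exp (- real n * chernoff_w M \<phi> p q + e n))"
proof -
  note [measurable] = assms(3-5)
  have "integrable M (\<lambda>x. \<phi> x * p x)"
    using rho_w_one[OF assms(6,12)] assms(6,8) assms(13)[of 1]
    by (intro integrableI_nonneg) (auto simp: less_top)
  moreover have "integrable M (\<lambda>x. \<phi> x * q x)"
    using rho_w_zero[OF assms(7,11)] assms(7,8) assms(13)[of 0]
    by (intro integrableI_nonneg) (auto simp: less_top)
  ultimately interpret weighted_densities M p q \<phi>
    unfolding weighted_densities_def using assms(1,3-8) by blast
  interpret positive_affinity M p q \<phi>
    using assms(13) by unfold_locales (simp add: rho_w_eq_affinity)
  show ?thesis
    using overlap_exp_chernoff by (simp add: TV_phi_eq_overlap chernoff_w_eq_chernoff)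
qed

end
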